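(* Let $X=\{x_1,\dots,x_t\}$ with $x_1<x_2<\dots<x_t$, and let $x=(x_{i_1},\dots,x_{i_m})$ be a time series with values in $X$ satisfying $\mathrm{set}(x)=X$. Let $Y=\{y_1,\dots,y_t\}$ with $y_1<y_2<\dots<y_t$, and let $y=(y_{i_1},\dots,y_{i_m})$ (with the same index sequence $i_1,\dots,i_m$) be a time series with values in $Y$ satisfying $\mathrm{set}(y)=Y$. Then for every $\ell\in\mathbb{N}$, $D_{(x,\ell)}=D_{(y,\ell)}$.
   Context: A time series of complexity $m$ is a vector in $\mathbb{R}^m$; $\mathrm{set}(x)$ is the set of entries of $x$, and $\mathrm{rank}_x(z)$ is the rank of $z\in\mathrm{set}(x)$ in $\mathrm{set}(x)$ (ordered increasingly). For $x\in\mathbb{R}^m$ and $y\in\mathbb{R}^\ell$, a traversal is a sequence of index pairs $(i,j)\in[m]\times[\ell]$ starting at $(1,1)$, ending at $(m,\ell)$, in which each pair $(i,j)$ is followed by one of $(i,j+1)$, $(i+1,j)$, $(i+1,j+1)$; $x_i$ and $y_j$ are matched if $(i,j)$ occurs in it. For a traversal $M$ of $x$ with a time series of complexity $\ell$, the traversal sectors are $S^{(x,M)}_j=\{x_i: x_i \text{ matched with the } j\text{-th vertex by } M\}$, $j\in[\ell]$, and the $\ell$-profile of $(x,M)$ is $\big((\mathrm{rank}_x(\min S^{(x,M)}_j),\mathrm{rank}_x(\max S^{(x,M)}_j))\big)_{j=1}^{\ell}$. $D_{(x,\ell)}$ is the set of all $\ell$-profiles of $(x,M)$ over all such traversals $M$.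 *)

theory Defs
  imports Complex_Main
begin

(* Time series of complexity m: a real list of length m.  Indices are 0-based:
   position i of the list corresponds to the paper's index i+1. *)

definition rank_ts :: "real list \<Rightarrow> real \<Rightarrow> nat" where
  "rank_ts x z = card {w \<in> set x. w \<le> z}"

definition is_traversal :: "nat \<Rightarrow> nat \<Rightarrow> (nat \<times> nat) list \<Rightarrow> bool" where
  "is_traversal m l M \<longleftrightarrow>
     M \<noteq> [] \<and> 0 < m \<and> 0 < l \<and>
     hd M = (0, 0) \<and> last M = (m - 1, l - 1) \<and>
     (\<forall>p \<in> set M. fst p < m \<and> snd p < l) \<and>
     (\<forall>k. Suc k < length M \<longrightarrow>
        (let (i, j) = M ! k in
           M ! Suc k = (i, Suc j) \<or> M ! Suc k = (Suc i, j) \<or> M ! Suc k = (Suc i, Suc j)))"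

definition sector :: "real list \<Rightarrow> (nat \<times> nat) list \<Rightarrow> nat \<Rightarrow> real set" where
  "sector x M j = {x ! i | i. (i, j) \<in> set M}"

definition profile :: "real list \<Rightarrow> nat \<Rightarrow> (nat \<times> nat) list \<Rightarrow> (nat \<times> nat) list" where
  "profile x l M = map (\<lambda>j. (rank_ts x (Min (sector x M j)), rank_ts x (Max (sector x M j)))) [0..<l]"

definition profiles :: "real list \<Rightarrow> nat \<Rightarrow> (nat \<times> nat) list set" where
  "profiles x l = {profile x l M | M. is_traversal (length x) l M}"

end

theory Submission
  imports Defs
begin

text \<open>The profiles of x depend only on the relative order of its entries: if
  y = map g x with g strictly increasing on set x, then every sector of y is the
  g-image of the corresponding sector of x, g commutes with Min and Max, and g
  preserves ranks. In the situation of the theorem such a g is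
  yv \<circ> xv\<inverse> (both strictly increasing on {1..t}).\<close>

lemma mono_on_Min_commute:
  fixes f :: "'a::linorder \<Rightarrow> 'b::linorder"
  assumes "mono_on A f" "S \<subseteq> A" "finite S" "S \<noteq> {}"
  shows "Min (f ` S) = f (Min S)"
proof (rule Min_eqI)
  show "finite (f ` S)" "f (Min S) \<in> f ` S"
    using assms by simp_all
  fix w assume "w \<in> f ` S"
  then obtain a where "a \<in> S" "w = f a" by blast
  moreover have "Min S \<in> A" "Min S \<le> a"
    using assms Min_in Min_le \<open>a \<in> S\<close> by blast+
  ultimately show "f (Min S) \<le> w"
    using assms(1,2) mono_onD by blast
qed

lemma mono_on_Max_commute:
  fixes f :: "'a::linorder \<Rightarrow> 'b::linorder"
  assumes "mono_on A f" "S \<subseteq> A" "finite S" "S \<noteq> {}"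
  shows "Max (f ` S) = f (Max S)"
proof (rule Max_eqI)
  show "finite (f ` S)" "f (Max S) \<in> f ` S"
    using assms by simp_all
  fix w assume "w \<in> f ` S"
  then obtain a where "a \<in> S" "w = f a" by blast
  moreover have "Max S \<in> A" "a \<le> Max S"
    using assms Max_in Max_ge \<open>a \<in> S\<close> by blast+
  ultimately show "w \<le> f (Max S)"
    using assms(1,2) mono_onD by blast
qed

lemma strict_mono_on_comp_the_inv_into:
  fixes f :: "'a::linorder \<Rightarrow> 'b::linorder" and h :: "'a \<Rightarrow> 'c::preorder"
  assumes f: "strict_mono_on A f" and h: "strict_mono_on A h"
  shows "strict_mono_on (f ` A) (h \<circ> the_inv_into A f)"
proof (rule strict_mono_onI)
  fix r s assume "r \<in> f ` A" "s \<in> f ` A" "r < s"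
  then obtain a b where ab: "a \<in> A" "b \<in> A" "r = f a" "s = f b" "f a < f b"
    by blast
  then have "a < b"
    using strict_mono_on_less[OF f] by blast
  then show "(h \<circ> the_inv_into A f) r < (h \<circ> the_inv_into A f) s"
    using ab strict_mono_onD[OF h] the_inv_into_f_f[OF strict_mono_on_imp_inj_on[OF f]]
    by simp
qed

lemma rank_ts_map_strict_mono:
  assumes g: "strict_mono_on (set x) g" and z: "z \<in> set x"
  shows "rank_ts (map g x) (g z) = rank_ts x z"
proof -
  have "{w \<in> set (map g x). w \<le> g z} = g ` {w \<in> set x. w \<le> z}"
    using strict_mono_on_less_eq[OF g _ z] by auto
  moreover have "inj_on g {w \<in> set x. w \<le> z}"
    using strict_mono_on_imp_inj_on[OF g] by (rule inj_on_subset) auto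
  ultimately show ?thesis
    by (simp add: rank_ts_def card_image)
qed

lemma traversal_step_snd:
  assumes "is_traversal m l M" "Suc k < length M"
  shows "snd (M ! Suc k) \<le> Suc (snd (M ! k))"
proof -
  obtain i j where "M ! k = (i, j)"
    by fastforce
  then show ?thesis
    using assms unfolding is_traversal_def by (fastforce dest!: spec[of _ k])
qed

lemma traversal_column_le_in_set:
  assumes M: "is_traversal m l M" and "k < length M" "j \<le> snd (M ! k)"
  shows "j \<in> snd ` set M"
  using assms(2,3)
proof (induction k)
  case 0
  have "M ! 0 = (0, 0)" "M \<noteq> []"
    using M by (auto simp: is_traversal_def hd_conv_nth)
  then show ?case
    using 0 by (metis image_eqI le_zero_eq nth_mem length_greater_0_conv snd_conv)
next
  case (Suc k)
  show ?case
  proof (cases "j = snd (M ! Suc k)")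
    case True
    then show ?thesis using Suc.prems(1) by simp
  next
    case False
    then show ?thesis
      using Suc traversal_step_snd[OF M Suc.prems(1)] by simp
  qed
qed

lemma traversal_covers_columns:
  assumes M: "is_traversal m l M" and "j < l"
  shows "j \<in> snd ` set M"
proof -
  have "M \<noteq> []" "snd (last M) = l - 1"
    using M by (auto simp: is_traversal_def)
  then have "length M - 1 < length M" "snd (M ! (length M - 1)) = l - 1"
    by (simp_all add: last_conv_nth)
  then show ?thesis
    using traversal_column_le_in_set[OF M] \<open>j < l\<close> by simp
qed

lemma sector_subset_set:
  assumes "is_traversal (length x) l M"
  shows "sector x M j \<subseteq> set x"
  using assms by (auto simp: sector_def is_traversal_def)

lemma sector_nonempty:
  assumes "is_traversal (length x) l M" "j < l"
  shows "sector x M j \<noteq> {}"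
  using traversal_covers_columns[OF assms] by (auto simp: sector_def)

lemma sector_map:
  assumes "is_traversal (length x) l M"
  shows "sector (map g x) M j = g ` sector x M j"
  using assms by (force simp: sector_def is_traversal_def)

lemma profile_map_strict_mono:
  assumes g: "strict_mono_on (set x) g" and M: "is_traversal (length x) l M"
  shows "profile (map g x) l M = profile x l M"
  unfolding profile_def
proof (rule map_cong[OF refl])
  fix j assume "j \<in> set [0..<l]"
  then have ne: "sector x M j \<noteq> {}"
    using sector_nonempty[OF M] by simp
  have sub: "sector x M j \<subseteq> set x" and fin: "finite (sector x M j)"
    using sector_subset_set[OF M] finite_subset by blast+
  have mono: "mono_on (set x) g"
    using g by (rule strict_mono_on_imp_mono_on)
  have "Min (sector x M j) \<in> set x" "Max (sector x M j) \<in> set x"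
    using sub fin ne Min_in Max_in by blast+
  then show "(rank_ts (map g x) (Min (sector (map g x) M j)),
              rank_ts (map g x) (Max (sector (map g x) M j))) =
             (rank_ts x (Min (sector x M j)), rank_ts x (Max (sector x M j)))"
    using sector_map[OF M] mono_on_Min_commute[OF mono sub fin ne]
      mono_on_Max_commute[OF mono sub fin ne] rank_ts_map_strict_mono[OF g]
    by simp
qed

lemma profiles_map_strict_mono:
  assumes "strict_mono_on (set x) g"
  shows "profiles (map g x) l = profiles x l"
  using profile_map_strict_mono[OF assms] by (force simp: profiles_def)

theorem lemma4p5:
  fixes t :: nat and xv yv :: "nat \<Rightarrow> real" and idx :: "nat list" and x y :: "real list"
  assumes "strict_mono_on {1..t} xv"
    and "strict_mono_on {1..t} yv"
    and "set idx \<subseteq> {1..t}"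
    and "x = map xv idx"
    and "set x = xv ` {1..t}"
    and "y = map yv idx"
    and "set y = yv ` {1..t}"
  shows "\<forall>l::nat. profiles x l = profiles y l"
proof
  fix l
  define g where "g = yv \<circ> the_inv_into {1..t} xv"
  have "strict_mono_on (xv ` {1..t}) g"
    unfolding g_def using assms(1,2) by (rule strict_mono_on_comp_the_inv_into)
  then have g_mono: "strict_mono_on (set x) g"
    using assms(5) by simp
  have "g (xv k) = yv k" if "k \<in> {1..t}" for k
    using the_inv_into_f_f[OF strict_mono_on_imp_inj_on[OF assms(1)] that] by (simp add: g_def)
  then have "y = map g x"
    using assms(3,4,6) by auto
  then show "profiles x l = profiles y l"
    using profiles_map_strict_mono[OF g_mono] by simp
qed

end
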